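(* Let $0 < 1/n_0 \ll \delta \ll 1$ and let $n\ge n_0$ and $k$ be positive integers with $k^2+k+1 \ge n \ge (k-1)^2+k+1$. Let $\mathcal H$ be an $n$-vertex linear hypergraph in which every edge $e$ satisfies $|e| \ge (1-\delta)\sqrt n$, and let $e,f\in\mathcal H$ be distinct intersecting edges each of size at most $k$. Let $w\in e\cap f$ and let $m$ be the number of edges of $\mathcal H$ of size at most $k-1$ containing $w$. If at least one of $e,f$ has size at most $k-1$, or if $m \le 1/(3\delta)$, then $\{e,f\}$ is a useful pair.
   Context: A hypergraph has a finite vertex set and a set of nonempty edges; linear means any two distinct edges share at most one vertex. For an edge $e$, $N(e)$ denotes the set of edges $f\ne e$ with $f\cap e\ne\varnothing$. In an $n$-vertex hypergraph a pair $\{e,f\}$ of edges is useful if $e\neq f$, $e\cap f\ne\varnothing$ and $|N(e)\cap N(f)|\le n-2$. Hierarchy convention: $0<1/n_0\ll\delta\ll1$ means there is $\delta_0>0$ such that for all $0<\delta\le\delta_0$ there is $n_0$ (depending on $\delta$) for which the statement holds. *)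

theory Defs
  imports Complex_Main
begin

definition hypergraph :: "nat set \<Rightarrow> nat set set \<Rightarrow> bool" where
  "hypergraph V H \<longleftrightarrow> finite V \<and> (\<forall>e\<in>H. e \<noteq> {} \<and> e \<subseteq> V)"

definition linear_hg :: "nat set set \<Rightarrow> bool" where
  "linear_hg H \<longleftrightarrow> (\<forall>e\<in>H. \<forall>f\<in>H. e \<noteq> f \<longrightarrow> card (e \<inter> f) \<le> 1)"

definition nbhd :: "nat set set \<Rightarrow> nat set \<Rightarrow> nat set set" where
  "nbhd H e = {f \<in> H. f \<noteq> e \<and> f \<inter> e \<noteq> {}}"

definition useful_pair :: "nat \<Rightarrow> nat set set \<Rightarrow> nat set \<Rightarrow> nat set \<Rightarrow> bool" where
  "useful_pair n H e f \<longleftrightarrow> e \<noteq> f \<and> e \<inter> f \<noteq> {} \<and>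
     int (card (nbhd H e \<inter> nbhd H f)) \<le> int n - 2"

end

theory Submission
  imports Defs
begin

text \<open>Let \<open>T\<close> be the set of edges through \<open>w\<close> other than \<open>e\<close> and \<open>f\<close>. A common
neighbour of \<open>e\<close> and \<open>f\<close> either lies in \<open>T\<close> or misses \<open>w\<close>; by linearity an edge of the
latter kind is determined by its points on \<open>e - {w}\<close> and \<open>f - {w}\<close>, so
\<open>|N(e) \<inter> N(f)| \<le> |T| + (|e| - 1)(|f| - 1)\<close>. Linearity also makes the sets \<open>g - {w}\<close>,
for \<open>g\<close> through \<open>w\<close>, pairwise disjoint subsets of \<open>V - {w}\<close>, so the sizes of the edges
through \<open>w\<close> sum to at most about \<open>n\<close>. Since every edge has size about \<open>\<surd>n \<approx> k\<close>, this
bounds \<open>|T|\<close>: by \<open>2k - 2\<close> in general, and by \<open>n - (k - 1)\<^sup>2 - 2\<close> when \<open>|e| = |f| = k\<close>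
and at most \<open>1/(3\<delta>)\<close> edges through \<open>w\<close> are shorter than \<open>k\<close>, each falling short of
\<open>k\<close> by at most about \<open>\<delta>k\<close>. Either way \<open>|N(e) \<inter> N(f)| \<le> n - 2\<close>.\<close>

definition edges_through :: "nat set set \<Rightarrow> nat \<Rightarrow> nat set set" where
  "edges_through H w = {g \<in> H. w \<in> g}"

lemma hypergraph_finite:
  assumes "hypergraph V H"
  shows "finite H" and "g \<in> H \<Longrightarrow> finite g"
  using assms unfolding hypergraph_def
  by (meson Pow_iff finite_Pow_iff finite_subset subsetI)+

lemma linear_hg_eq_if_two_common:
  assumes "hypergraph V H" "linear_hg H" "g \<in> H" "g' \<in> H" "x \<noteq> y"
    and "x \<in> g \<inter> g'" "y \<in> g \<inter> g'"
  shows "g = g'"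
proof (rule ccontr)
  assume "g \<noteq> g'"
  then have "card (g \<inter> g') \<le> 1" using assms(2-4) unfolding linear_hg_def by blast
  moreover have "card {x, y} \<le> card (g \<inter> g')"
    using assms by (intro card_mono) (auto intro: hypergraph_finite)
  ultimately show False using \<open>x \<noteq> y\<close> by simp
qed

lemma sum_card_edges_through_le:
  assumes hg: "hypergraph V H" and lin: "linear_hg H" and "w \<in> V"
  shows "(\<Sum>g\<in>edges_through H w. real (card g) - 1) \<le> real (card V) - 1"
proof -
  let ?S = "edges_through H w"
  have fin: "finite ?S" "\<And>g. g \<in> ?S \<Longrightarrow> finite g"
    using hypergraph_finite[OF hg] unfolding edges_through_def by auto
  have disj: "(g - {w}) \<inter> (g' - {w}) = {}" if "g \<in> ?S" "g' \<in> ?S" "g \<noteq> g'" for g g'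
    using that linear_hg_eq_if_two_common[OF hg lin, of g g' _ w]
    unfolding edges_through_def by blast
  have "(\<Sum>g\<in>?S. real (card g) - 1) = (\<Sum>g\<in>?S. real (card (g - {w})))"
  proof (rule sum.cong)
    fix g assume "g \<in> ?S"
    then have "card g \<ge> 1" using fin(2) by (auto simp: edges_through_def Suc_le_eq card_gt_0_iff)
    then show "real (card g) - 1 = real (card (g - {w}))"
      using \<open>g \<in> ?S\<close> by (simp add: edges_through_def of_nat_diff)
  qed simp
  also have "\<dots> = real (card (\<Union>g\<in>?S. g - {w}))"
    using fin disj by (subst card_UN_disjoint) auto
  also have "\<dots> \<le> real (card (V - {w}))"
    using hg unfolding hypergraph_def edges_through_def by (intro of_nat_mono card_mono) auto
  also have "\<dots> = real (card V) - 1"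
  proof -
    have "card V \<ge> 1" using hg \<open>w \<in> V\<close> unfolding hypergraph_def by (auto simp: Suc_le_eq card_gt_0_iff)
    then show ?thesis using hg \<open>w \<in> V\<close> unfolding hypergraph_def by (simp add: of_nat_diff)
  qed
  finally show ?thesis .
qed

lemma sum_card_edges_through_minus_le:
  assumes hg: "hypergraph V H" and lin: "linear_hg H" and ef: "e \<in> H" "f \<in> H" "e \<noteq> f"
    and w: "w \<in> e \<inter> f"
  shows "(\<Sum>g\<in>edges_through H w - {e, f}. real (card g) - 1)
    \<le> real (card V) + 1 - real (card e) - real (card f)"
proof -
  define T where "T = edges_through H w - {e, f}"
  have "finite T" using hypergraph_finite(1)[OF hg] unfolding T_def edges_through_def by auto
  have "w \<in> V" using hg ef w unfolding hypergraph_def by blast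
  have "edges_through H w = insert e (insert f T)" "e \<notin> insert f T" "f \<notin> T"
    using ef w unfolding T_def edges_through_def by auto
  then have "(\<Sum>g\<in>edges_through H w. real (card g) - 1)
      = (real (card e) - 1) + ((real (card f) - 1) + (\<Sum>g\<in>T. real (card g) - 1))"
    using \<open>finite T\<close> by simp
  then show ?thesis
    using sum_card_edges_through_le[OF hg lin \<open>w \<in> V\<close>] unfolding T_def by linarith
qed

lemma card_common_nbhd_le:
  assumes hg: "hypergraph V H" and lin: "linear_hg H" and "e \<in> H" "f \<in> H" "e \<noteq> f"
    and w: "w \<in> e \<inter> f"
  shows "card (nbhd H e \<inter> nbhd H f)
    \<le> card (edges_through H w - {e, f}) + (card e - 1) * (card f - 1)"
proof -
  define T where "T = edges_through H w - {e, f}"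
  define P where "P = {g \<in> H. w \<notin> g \<and> g \<inter> e \<noteq> {} \<and> g \<inter> f \<noteq> {}}"
  have fin: "finite T" "finite P" "finite e" "finite f"
    using hypergraph_finite[OF hg] assms(3,4) unfolding T_def P_def edges_through_def by auto
  have "card (nbhd H e \<inter> nbhd H f) \<le> card (T \<union> P)"
    using fin by (intro card_mono) (auto simp: nbhd_def T_def P_def edges_through_def)
  also have "\<dots> \<le> card T + card P" by (rule card_Un_le)
  finally have split: "card (nbhd H e \<inter> nbhd H f) \<le> card T + card P" .
  define \<phi> where "\<phi> g = (SOME x. x \<in> g \<inter> e, SOME y. y \<in> g \<inter> f)" for g
  have \<phi>: "fst (\<phi> g) \<in> g \<inter> (e - {w}) \<and> snd (\<phi> g) \<in> g \<inter> (f - {w})" if "g \<in> P" for g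
    using that someI_ex[of "\<lambda>x. x \<in> g \<inter> e"] someI_ex[of "\<lambda>y. y \<in> g \<inter> f"]
    unfolding P_def \<phi>_def by auto
  have "inj_on \<phi> P"
  proof (rule inj_onI)
    fix g g' assume g: "g \<in> P" "g' \<in> P" "\<phi> g = \<phi> g'"
    have "fst (\<phi> g) \<noteq> snd (\<phi> g)"
      using \<phi>[OF g(1)] linear_hg_eq_if_two_common[OF hg lin assms(3,4), of "fst (\<phi> g)" w]
        w \<open>e \<noteq> f\<close> by auto
    then show "g = g'"
      using g \<phi>[OF g(1)] \<phi>[OF g(2)]
        linear_hg_eq_if_two_common[OF hg lin, of g g' "fst (\<phi> g)" "snd (\<phi> g)"]
      unfolding P_def by auto
  qed
  moreover have "\<phi> ` P \<subseteq> (e - {w}) \<times> (f - {w})"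
  proof
    fix p assume "p \<in> \<phi> ` P"
    then obtain g where "g \<in> P" "p = \<phi> g" by blast
    then show "p \<in> (e - {w}) \<times> (f - {w})" using \<phi> by (auto simp: mem_Times_iff)
  qed
  ultimately have "card P \<le> card ((e - {w}) \<times> (f - {w}))"
    using fin by (intro card_inj_on_le) auto
  also have "\<dots> = (card e - 1) * (card f - 1)"
    using w fin by (simp add: card_cartesian_product)
  finally show ?thesis using split unfolding T_def by simp
qed

lemma real_lower_bounds_of_nat_bound:
  assumes "(k - 1)^2 + k + 1 \<le> n" "k \<ge> 1"
  shows "(real k)^2 - real k + 2 \<le> real n" and "real k - 1/2 \<le> sqrt (real n)"
proof -
  have "real ((k - 1)^2 + k + 1) = (real k - 1)^2 + real k + 1"
    using assms(2) by (simp add: of_nat_diff)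
  also have "\<dots> = (real k)^2 - real k + 2" by (simp add: power2_eq_square algebra_simps)
  finally have "real ((k - 1)^2 + k + 1) = (real k)^2 - real k + 2" .
  moreover have "real ((k - 1)^2 + k + 1) \<le> real n"
    using assms(1) by (simp only: of_nat_le_iff)
  ultimately show n: "(real k)^2 - real k + 2 \<le> real n" by simp
  have "(real k - 1/2)^2 \<le> real n"
    using n by (simp add: power2_eq_square algebra_simps)
  then show "real k - 1/2 \<le> sqrt (real n)" by (simp add: real_le_rsqrt)
qed

lemma card_le_if_all_edges_large:
  fixes T :: "'a set set" and n k :: nat and \<delta> :: real
  assumes "finite T" "\<delta> \<le> 1/10" "k \<ge> 6"
    and n: "real n \<le> (real k)^2 + real k + 1" and sqrt_n: "real k - 1/2 \<le> sqrt (real n)"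
    and large: "\<forall>g\<in>T. (1 - \<delta>) * sqrt (real n) \<le> real (card g)"
    and sum: "(\<Sum>g\<in>T. real (card g) - 1) \<le> real n"
  shows "card T \<le> 2 * k - 2"
proof (rule ccontr)
  assume "\<not> ?thesis"
  then have t: "2 * real k - 1 \<le> real (card T)" using \<open>k \<ge> 6\<close> by linarith
  define L where "L = (1 - \<delta>) * sqrt (real n) - 1"
  have "(9/10) * (real k - 1/2) \<le> (1 - \<delta>) * sqrt (real n)"
    using assms(2,3) sqrt_n by (intro mult_mono) auto
  then have L: "(9/10) * real k - 29/20 \<le> L" unfolding L_def by simp
  have "(2 * real k - 1) * ((9/10) * real k - 29/20) \<le> real (card T) * L"
    using t L \<open>k \<ge> 6\<close> by (intro mult_mono) auto
  also have "\<dots> \<le> (\<Sum>g\<in>T. real (card g) - 1)"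
    using sum_bounded_below[of T L "\<lambda>g. real (card g) - 1"] large unfolding L_def by auto
  moreover have "real k * ((4/5) * real k - 24/5) \<ge> 0"
    using \<open>k \<ge> 6\<close> by (intro mult_nonneg_nonneg) auto
  then have "(real k)^2 + real k + 1 < (2 * real k - 1) * ((9/10) * real k - 29/20)"
    by (simp add: power2_eq_square field_simps)
  ultimately show False using sum n by linarith
qed

lemma card_bound_of_product_bound:
  fixes t n k :: nat
  assumes "k \<ge> 6" and n: "(real k)^2 - real k + 2 \<le> real n"
    and t: "real t * (real k - 1) \<le> real n + 1 - 3/2 * real k"
  shows "t + (k - 1)^2 + 2 \<le> n"
proof (rule ccontr)
  assume "\<not> ?thesis"
  then have "n \<le> t + (k - 1)^2 + 1" by simp
  then have "real n \<le> real (t + (k - 1)^2 + 1)" by (simp only: of_nat_le_iff)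
  then have n_le: "real n \<le> real t + (real k - 1)^2 + 1"
    using \<open>k \<ge> 6\<close> by (simp add: of_nat_diff)
  define s where "s = real n - 1 - (real k - 1)^2"
  have sq: "(real k - 1)^2 = real k * real k - 2 * real k + 1" "(real k)^2 = real k * real k"
    by (simp_all add: power2_eq_square algebra_simps)
  have "s * (real k - 1) \<le> real t * (real k - 1)"
    using n_le \<open>k \<ge> 6\<close> unfolding s_def by (intro mult_right_mono) auto
  moreover have "real k * (real k - 2) \<le> s * (real k - 2)"
  proof (rule mult_right_mono)
    show "real k \<le> s" using n sq unfolding s_def by linarith
  qed (use \<open>k \<ge> 6\<close> in simp)
  moreover have "s * (real k - 1) = s * (real k - 2) + s"
    and "real k * (real k - 2) = real k * real k - 2 * real k"
    by (simp_all add: algebra_simps)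
  ultimately show False
    using t n sq s_def \<open>k \<ge> 6\<close> by linarith
qed

lemma card_le_if_few_short_edges:
  fixes T :: "'a set set" and n k :: nat and \<delta> :: real
  assumes "finite T" "0 < \<delta>" "\<delta> \<le> 1/10" "1/\<delta> \<le> real k" "k \<ge> 6"
    and n: "(real k)^2 - real k + 2 \<le> real n" and sqrt_n: "real k - 1/2 \<le> sqrt (real n)"
    and large: "\<forall>g\<in>T. (1 - \<delta>) * sqrt (real n) \<le> real (card g)"
    and few: "real (card {g\<in>T. card g \<le> k - 1}) \<le> 1 / (3 * \<delta>)"
    and sum: "(\<Sum>g\<in>T. real (card g) - 1) \<le> real n + 1 - 2 * real k"
  shows "card T + (k - 1)^2 + 2 \<le> n"
proof -
  define c where "c = max 0 (real k - (1 - \<delta>) * sqrt (real n))"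
  have "(1 - \<delta>) * (real k - 1/2) \<le> (1 - \<delta>) * sqrt (real n)"
    using sqrt_n assms(3) by (intro mult_left_mono) auto
  moreover have "(1 - \<delta>) * (real k - 1/2) = real k - 1/2 - \<delta> * real k + \<delta> / 2"
    by (simp add: field_simps)
  ultimately have "c \<le> 1/2 + \<delta> * real k"
    using assms(2) unfolding c_def by simp
  then have "c * real (card {g\<in>T. card g \<le> k - 1}) \<le> (1/2 + \<delta> * real k) * (1 / (3 * \<delta>))"
    using few by (intro mult_mono) (auto simp: c_def)
  also have "\<dots> = 1 / (6 * \<delta>) + real k / 3" using assms(2) by (simp add: field_simps)
  also have "1 / (6 * \<delta>) \<le> real k / 6" using assms(2,4) by (simp add: field_simps)
  finally have deficit: "c * real (card {g\<in>T. card g \<le> k - 1}) \<le> real k / 2" by simp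
  have "real k - 1 \<le> (real (card g) - 1) + (if card g \<le> k - 1 then c else 0)" if "g \<in> T" for g
    using large that \<open>k \<ge> 6\<close> unfolding c_def by (cases "card g \<le> k - 1") auto
  then have "real (card T) * (real k - 1)
      \<le> (\<Sum>g\<in>T. (real (card g) - 1) + (if card g \<le> k - 1 then c else 0))"
    using sum_bounded_below[of T "real k - 1"] by auto
  also have "\<dots> = (\<Sum>g\<in>T. real (card g) - 1) + c * real (card {g\<in>T. card g \<le> k - 1})"
    using sum.inter_filter[OF \<open>finite T\<close>, of "\<lambda>_. c" "\<lambda>g. card g \<le> k - 1"]
    by (simp add: sum.distrib mult.commute)
  finally have t: "real (card T) * (real k - 1) \<le> real n + 1 - 3/2 * real k"
    using sum deficit by linarith
  then show ?thesis by (rule card_bound_of_product_bound[OF \<open>k \<ge> 6\<close> n])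
qed

lemma le_if_Suc_square_le:
  fixes k K :: nat
  assumes "(K + 1)^2 \<le> k^2 + k + 1"
  shows "K \<le> k"
proof (rule ccontr)
  assume "\<not> K \<le> k"
  then have "(k + 1)^2 < (K + 1)^2" by (intro power_strict_mono) auto
  moreover have "k^2 + k + 1 \<le> (k + 1)^2" by (simp add: power2_eq_square)
  ultimately show False using assms by linarith
qed

lemma useful_pair_if_k_large:
  fixes \<delta> :: real
  assumes \<delta>: "0 < \<delta>" "\<delta> \<le> 1/10" and k: "1/\<delta> \<le> real k" "k \<ge> 6"
    and n: "n \<le> k^2 + k + 1" "(k - 1)^2 + k + 1 \<le> n"
    and hg: "hypergraph V H" "card V = n" "linear_hg H"
    and large: "\<forall>g\<in>H. (1 - \<delta>) * sqrt (real n) \<le> real (card g)"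
    and ef: "e \<in> H" "f \<in> H" "e \<noteq> f" "card e \<le> k" "card f \<le> k" and w: "w \<in> e \<inter> f"
    and short: "card e \<le> k - 1 \<or> card f \<le> k - 1 \<or>
      real (card {g\<in>H. card g \<le> k - 1 \<and> w \<in> g}) \<le> 1 / (3 * \<delta>)"
  shows "useful_pair n H e f"
proof -
  define T where "T = edges_through H w - {e, f}"
  have fin: "finite T" "finite e" "finite f"
    using hypergraph_finite[OF hg(1)] ef(1,2) unfolding T_def edges_through_def by auto
  have "card e \<ge> 1" "card f \<ge> 1" using w fin by (auto simp: Suc_le_eq card_gt_0_iff)
  have sum: "(\<Sum>g\<in>T. real (card g) - 1) \<le> real n + 1 - real (card e) - real (card f)"
    using sum_card_edges_through_minus_le[OF hg(1,3) ef(1-3) w] hg(2) unfolding T_def by simp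
  have common: "card (nbhd H e \<inter> nbhd H f) \<le> card T + (card e - 1) * (card f - 1)"
    using card_common_nbhd_le[OF hg(1,3) ef(1-3) w] unfolding T_def .
  have large_T: "\<forall>g\<in>T. (1 - \<delta>) * sqrt (real n) \<le> real (card g)"
    using large unfolding T_def edges_through_def by auto
  have "real n \<le> real (k^2 + k + 1)" using n(1) by (simp only: of_nat_le_iff)
  then have n_real: "real n \<le> (real k)^2 + real k + 1" "(real k)^2 - real k + 2 \<le> real n"
    and sqrt_n: "real k - 1/2 \<le> sqrt (real n)"
    using n(2) real_lower_bounds_of_nat_bound[of k n] \<open>k \<ge> 6\<close> by auto
  have "card (nbhd H e \<inter> nbhd H f) + 2 \<le> n"
  proof (cases "card e \<le> k - 1 \<or> card f \<le> k - 1")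
    case True
    have "card T \<le> 2 * k - 2"
      using card_le_if_all_edges_large[OF fin(1) \<delta>(2) \<open>k \<ge> 6\<close> n_real(1) sqrt_n large_T] sum
        \<open>card e \<ge> 1\<close> \<open>card f \<ge> 1\<close> by linarith
    moreover have "(card e - 1) * (card f - 1) \<le> (k - 2) * (k - 1)"
      using True ef(4,5) mult_le_mono[of "card e - 1" "k - 2" "card f - 1" "k - 1"]
        mult_le_mono[of "card e - 1" "k - 1" "card f - 1" "k - 2"] by (auto simp: mult.commute)
    moreover have "(2 * k - 2) + (k - 2) * (k - 1) + 2 = (k - 1)^2 + k + 1"
    proof -
      have "k = (k - 2) + 2" using \<open>k \<ge> 6\<close> by simp
      then obtain j where "k = j + 2" by blast
      then show ?thesis by (simp add: power2_eq_square algebra_simps)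
    qed
    ultimately show ?thesis using common n(2) by linarith
  next
    case False
    then have "card e = k" "card f = k"
      and "real (card {g\<in>H. card g \<le> k - 1 \<and> w \<in> g}) \<le> 1 / (3 * \<delta>)"
      using short ef(4,5) by auto
    moreover have "card {g\<in>T. card g \<le> k - 1} \<le> card {g\<in>H. card g \<le> k - 1 \<and> w \<in> g}"
      using hypergraph_finite(1)[OF hg(1)] unfolding T_def edges_through_def
      by (intro card_mono) auto
    ultimately have "card T + (k - 1)^2 + 2 \<le> n"
      using card_le_if_few_short_edges[OF fin(1) \<delta> k n_real(2) sqrt_n large_T _ _] sum
      by (simp add: power2_eq_square)
    then show ?thesis using common \<open>card e = k\<close> \<open>card f = k\<close> by (simp add: power2_eq_square)
  qed
  then show ?thesis using ef(3) w unfolding useful_pair_def by auto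
qed

lemma useful_pair_if_n_large:
  fixes \<delta> :: real
  assumes "0 < \<delta>" "\<delta> \<le> 1/10" "(nat \<lceil>1/\<delta>\<rceil> + 7)^2 \<le> n"
    and "n \<le> k^2 + k + 1" "(k - 1)^2 + k + 1 \<le> n"
    and "hypergraph V H" "card V = n" "linear_hg H"
    and "\<forall>g\<in>H. (1 - \<delta>) * sqrt (real n) \<le> real (card g)"
    and "e \<in> H" "f \<in> H" "e \<noteq> f" "card e \<le> k" "card f \<le> k" "w \<in> e \<inter> f"
    and "card e \<le> k - 1 \<or> card f \<le> k - 1 \<or>
      real (card {g\<in>H. card g \<le> k - 1 \<and> w \<in> g}) \<le> 1 / (3 * \<delta>)"
  shows "useful_pair n H e f"
proof -
  have "(nat \<lceil>1/\<delta>\<rceil> + 6 + 1)^2 = (nat \<lceil>1/\<delta>\<rceil> + 7)^2" by simp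
  then have "(nat \<lceil>1/\<delta>\<rceil> + 6 + 1)^2 \<le> k^2 + k + 1" using assms(3,4) by linarith
  then have "nat \<lceil>1/\<delta>\<rceil> + 6 \<le> k" by (rule le_if_Suc_square_le)
  moreover have "1/\<delta> \<le> real (nat \<lceil>1/\<delta>\<rceil>)" by (rule real_nat_ceiling_ge)
  ultimately have "1/\<delta> \<le> real k" "6 \<le> k" by linarith+
  then show ?thesis by (rule useful_pair_if_k_large[OF assms(1,2) _ _ assms(4-)])
qed

theorem proposition5p5:
  shows "\<exists>\<delta>0>0. \<forall>\<delta>::real. 0 < \<delta> \<and> \<delta> \<le> \<delta>0 \<longrightarrow> (\<exists>n0::nat. \<forall>n k::nat.
     \<forall>V H e f w.
       n \<ge> n0 \<and> k > 0 \<and> n > 0 \<and> k^2 + k + 1 \<ge> n \<and> n \<ge> (k-1)^2 + k + 1 \<and>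
       hypergraph V H \<and> card V = n \<and> linear_hg H \<and>
       (\<forall>g\<in>H. real (card g) \<ge> (1 - \<delta>) * sqrt (real n)) \<and>
       e \<in> H \<and> f \<in> H \<and> e \<noteq> f \<and> e \<inter> f \<noteq> {} \<and> card e \<le> k \<and> card f \<le> k \<and>
       w \<in> e \<inter> f \<and>
       (card e \<le> k - 1 \<or> card f \<le> k - 1 \<or>
        real (card {g\<in>H. card g \<le> k - 1 \<and> w \<in> g}) \<le> 1 / (3 * \<delta>))
       \<longrightarrow> useful_pair n H e f)"
  apply (intro exI[of _ "1/10"] conjI allI impI)
   apply simp
  subgoal for \<delta>
    by (intro exI[of _ "(nat \<lceil>1/\<delta>\<rceil> + 7)^2"] allI impI) (auto intro: useful_pair_if_n_large)
  done

end
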